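(* Let $(V_1,\dots,V_n)$ be an $n$-tuple of doubly non-commuting isometries on $H$, let $A=\{i_1,\dots,i_l\}\subseteq\{1,\dots,n\}$ be a (possibly empty) set of $l$ distinct indices, and let $k_{i_1},\dots,k_{i_l}\ge0$. Then $$\big[V_{i_1}^{k_{i_1}}(\mathbf 1-V_{i_1}V_{i_1}^* )V_{i_1}^{*k_{i_1}}\big]\cdots\big[V_{i_l}^{k_{i_l}}(\mathbf 1-V_{i_l}V_{i_l}^* )V_{i_l}^{*k_{i_l}}\big]=\big[V_{i_1}^{k_{i_1}}\cdots V_{i_l}^{k_{i_l}}\big]\big[(\mathbf 1-V_{i_1}V_{i_1}^* )\cdots(\mathbf 1-V_{i_l}V_{i_l}^* )\big]\big[V_{i_l}^{*k_{i_l}}\cdots V_{i_1}^{*k_{i_1}}\big]$$ and $$\big[V_{i_1}^{k_{i_1}}V_{i_1}^{*k_{i_1}}\big]\cdots\big[V_{i_l}^{k_{i_l}}V_{i_l}^{*k_{i_l}}\big]=\big[V_{i_1}^{k_{i_1}}\cdots V_{i_l}^{k_{i_l}}\big]\big[V_{i_l}^{*k_{i_l}}\cdots V_{i_1}^{*k_{i_1}}\big].$$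
   Context: Fix $n\ge1$ and $z_{ij}\in\mathbb T$ ($i\ne j$) with $z_{ji}=\overline{z_{ij}}$; $(V_1,\dots,V_n)$ is doubly non-commuting if the $V_i$ are isometries on $H$ with $V_i^*V_j=\overline{z_{ij}}V_jV_i^*$ for $i\ne j$. $\mathbf 1$ is the identity operator; empty products equal $\mathbf 1$. *)

theory Defs
  imports "HOL-Analysis.Analysis"
begin

text \<open>A complex Hilbert space is modelled as a real Hilbert space ('h :: {real_inner, complete_space})
  together with a complex structure J (multiplication by i): J is real-linear, J (J x) = - x and
  J is orthogonal. The complex inner product is x \<bullet> y + i (x \<bullet> J y); for J-commuting
  (i.e. complex-linear) operators the real adjoint coincides with the complex adjoint.\<close>

definition complex_structure :: "('h::real_inner \<Rightarrow> 'h) \<Rightarrow> bool" where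
  "complex_structure J \<longleftrightarrow> linear J \<and> (\<forall>x. J (J x) = - x) \<and> (\<forall>x y. J x \<bullet> J y = x \<bullet> y)"

definition cscale :: "('h::real_vector \<Rightarrow> 'h) \<Rightarrow> complex \<Rightarrow> 'h \<Rightarrow> 'h" where
  "cscale J c x = Re c *\<^sub>R x + Im c *\<^sub>R J x"

definition cbounded_op :: "('h::real_normed_vector \<Rightarrow> 'h) \<Rightarrow> ('h \<Rightarrow> 'h) \<Rightarrow> bool" where
  "cbounded_op J T \<longleftrightarrow> bounded_linear T \<and> (\<forall>x. T (J x) = J (T x))"

definition is_adjoint :: "('h::real_inner \<Rightarrow> 'h) \<Rightarrow> ('h \<Rightarrow> 'h) \<Rightarrow> bool" where
  "is_adjoint T S \<longleftrightarrow> (\<forall>x y. T x \<bullet> y = x \<bullet> S y)"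

definition isometry_op :: "('h::real_inner \<Rightarrow> 'h) \<Rightarrow> ('h \<Rightarrow> 'h) \<Rightarrow> ('h \<Rightarrow> 'h) \<Rightarrow> bool" where
  "isometry_op J T S \<longleftrightarrow> cbounded_op J T \<and> is_adjoint T S \<and> S \<circ> T = id"

definition doubly_noncommuting ::
  "('h::real_inner \<Rightarrow> 'h) \<Rightarrow> nat \<Rightarrow> (nat \<Rightarrow> nat \<Rightarrow> complex) \<Rightarrow> (nat \<Rightarrow> 'h \<Rightarrow> 'h) \<Rightarrow> (nat \<Rightarrow> 'h \<Rightarrow> 'h) \<Rightarrow> bool" where
  "doubly_noncommuting J n z V Vs \<longleftrightarrow>
     (\<forall>i\<in>{1..n}. isometry_op J (V i) (Vs i)) \<and>
     (\<forall>i\<in>{1..n}. \<forall>j\<in>{1..n}. i \<noteq> j \<longrightarrow>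
        cmod (z i j) = 1 \<and> z j i = cnj (z i j) \<and>
        Vs i \<circ> V j = cscale J (cnj (z i j)) \<circ> V j \<circ> Vs i)"

definition oprod :: "('a \<Rightarrow> 'a) list \<Rightarrow> 'a \<Rightarrow> 'a" where
  "oprod fs = foldr (\<circ>) fs id"

end

theory Submission
  imports Defs
begin

text \<open>For \<open>i \<noteq> j\<close> the relation \<open>V\<^sub>i\<^sup>* V\<^sub>j = z\<^sub>i\<^sub>j\<^sup>* V\<^sub>j V\<^sub>i\<^sup>*\<close> forces
  \<open>V\<^sub>i V\<^sub>j = z\<^sub>i\<^sub>j V\<^sub>j V\<^sub>i\<close> and \<open>V\<^sub>i\<^sup>* V\<^sub>j\<^sup>* = z\<^sub>i\<^sub>j V\<^sub>j\<^sup>* V\<^sub>i\<^sup>*\<close>, so any two of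
  \<open>V\<^sub>i, V\<^sub>i\<^sup>*, V\<^sub>j, V\<^sub>j\<^sup>*\<close> commute up to a unimodular phase. In the expressions that matter
  the phases cancel: \<open>V\<^sub>i\<^sup>a V\<^sub>i\<^sup>*\<^sup>a\<close> and \<open>V\<^sub>i\<^sup>a (1 - V\<^sub>i V\<^sub>i\<^sup>*) V\<^sub>i\<^sup>*\<^sup>a\<close> commute with
  \<open>V\<^sub>j\<^sup>b\<close>, \<open>V\<^sub>i\<^sup>*\<^sup>a\<close> commutes with \<open>V\<^sub>j V\<^sub>j\<^sup>*\<close>, and moving \<open>V\<^sub>i\<^sup>a\<close> past a product
  \<open>A\<close> of powers of the other \<open>V\<^sub>j\<close> costs a phase \<open>q\<close> while moving \<open>V\<^sub>i\<^sup>*\<^sup>a\<close> past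
  \<open>A\<^sup>*\<close> costs \<open>q\<^sup>*\<close>. Both identities then follow by induction on the index list, pulling
  the outer factors of the first conjugate \<open>V\<^sub>i\<^sup>k (D\<^sub>i) V\<^sub>i\<^sup>*\<^sup>k\<close> to the outside, with
  \<open>D\<^sub>i = 1 - V\<^sub>i V\<^sub>i\<^sup>*\<close> or \<open>D\<^sub>i = 1\<close>.\<close>

definition complex_linear :: "('h::real_vector \<Rightarrow> 'h) \<Rightarrow> ('h \<Rightarrow> 'h) \<Rightarrow> bool" where
  "complex_linear J T \<longleftrightarrow> linear T \<and> (\<forall>x. T (J x) = J (T x))"

definition qcommute :: "('h::real_vector \<Rightarrow> 'h) \<Rightarrow> complex \<Rightarrow> ('h \<Rightarrow> 'h) \<Rightarrow> ('h \<Rightarrow> 'h) \<Rightarrow> bool" where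
  "qcommute J q S T \<longleftrightarrow> S \<circ> T = cscale J q \<circ> T \<circ> S"

lemma oprod_Nil [simp]: "oprod [] = id"
  by (simp add: oprod_def)

lemma oprod_Cons [simp]: "oprod (f # fs) = f \<circ> oprod fs"
  by (simp add: oprod_def)

lemma oprod_append [simp]: "oprod (fs @ gs) = oprod fs \<circ> oprod gs"
  by (induction fs) simp_all

lemma oprod_map_id [simp]: "oprod (map (\<lambda>_. id) xs) = id"
  by (induction xs) simp_all

lemma oprod_commute:
  assumes "\<And>f. f \<in> set fs \<Longrightarrow> S \<circ> f = f \<circ> S"
  shows "S \<circ> oprod fs = oprod fs \<circ> S"
  using assms
proof (induction fs)
  case (Cons f fs)
  have "S \<circ> f = f \<circ> S"
    by (rule Cons.prems) simp
  moreover have "S \<circ> oprod fs = oprod fs \<circ> S"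
    by (rule Cons.IH, rule Cons.prems) simp
  ultimately show ?case
    by (metis comp_assoc oprod_Cons)
qed simp

lemma is_adjoint_comp: "is_adjoint S S' \<Longrightarrow> is_adjoint T T' \<Longrightarrow> is_adjoint (S \<circ> T) (T' \<circ> S')"
  by (simp add: is_adjoint_def)

lemma is_adjoint_funpow:
  assumes "is_adjoint S S'"
  shows "is_adjoint (S ^^ a) (S' ^^ a)"
proof (induction a)
  case (Suc a)
  then show ?case
    using is_adjoint_comp[OF assms Suc] by (metis funpow.simps(2) funpow_Suc_right)
qed (simp add: is_adjoint_def)

lemma is_adjoint_oprod:
  "(\<And>i. i \<in> set xs \<Longrightarrow> is_adjoint (S i) (S' i)) \<Longrightarrow>
     is_adjoint (oprod (map S xs)) (oprod (map S' (rev xs)))"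
  by (induction xs) (simp_all add: is_adjoint_comp, simp add: is_adjoint_def)

lemma is_adjoint_linear:
  fixes T S :: "'h::real_inner \<Rightarrow> 'h"
  assumes "is_adjoint T S"
  shows "linear S"
proof (rule linearI)
  have adj: "x \<bullet> S y = T x \<bullet> y" for x y
    using assms by (simp add: is_adjoint_def)
  show "S (b + c) = S b + S c" for b c
    using vector_eq_ldot[of "S (b + c)" "S b + S c"] by (simp add: adj inner_add_right)
  show "S (r *\<^sub>R b) = r *\<^sub>R S b" for r b
    using vector_eq_ldot[of "S (r *\<^sub>R b)" "r *\<^sub>R S b"] by (simp add: adj)
qed

lemma is_adjoint_unique:
  fixes T :: "'h::real_inner \<Rightarrow> 'h"
  assumes "is_adjoint T S" and "is_adjoint T S'"
  shows "S = S'"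
proof
  fix y
  show "S y = S' y"
    using assms vector_eq_ldot[of "S y" "S' y"] by (simp add: is_adjoint_def)
qed

lemma unimodular_mult_cnj:
  assumes "cmod q = 1"
  shows "q * cnj q = 1" and "cnj q * q = 1"
  using complex_norm_square[of q] assms by (simp_all add: mult.commute)

lemma norm_prod_list_unimodular:
  fixes q :: "'a \<Rightarrow> complex"
  shows "(\<And>j. j \<in> set xs \<Longrightarrow> cmod (q j) = 1) \<Longrightarrow> cmod (\<Prod>j\<leftarrow>xs. q j) = 1"
  by (induction xs) (simp_all add: norm_mult)

lemma cscale_1 [simp]: "cscale J 1 = id"
  by (simp add: cscale_def fun_eq_iff)

lemma complex_linear_id: "complex_linear J id"
  by (simp add: complex_linear_def linear_id)

lemma complex_linear_comp:
  "complex_linear J S \<Longrightarrow> complex_linear J T \<Longrightarrow> complex_linear J (S \<circ> T)"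
  by (simp add: complex_linear_def linear_compose)

lemma complex_linear_funpow: "complex_linear J T \<Longrightarrow> complex_linear J (T ^^ a)"
  by (induction a) (simp_all add: complex_linear_id complex_linear_comp)

lemma complex_linear_oprod:
  "(\<And>f. f \<in> set fs \<Longrightarrow> complex_linear J f) \<Longrightarrow> complex_linear J (oprod fs)"
  by (induction fs) (simp_all add: complex_linear_id complex_linear_comp)

lemma complex_linear_diff_id:
  assumes "complex_linear J T" "linear J"
  shows "complex_linear J (\<lambda>x. x - T x)"
  using assms unfolding complex_linear_def
  by (auto intro: linear_compose_sub[OF linear_id[unfolded id_def]] simp: linear_diff)

lemma complex_linear_cscale:
  assumes "complex_linear J T"
  shows "T (cscale J q x) = cscale J q (T x)"
  using assms by (simp add: complex_linear_def cscale_def linear_add linear_scale)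

lemma qcommuteD: "qcommute J q S T \<Longrightarrow> S (T x) = cscale J q (T (S x))"
  by (simp add: qcommute_def fun_eq_iff)

lemma qcommute_1: "qcommute J 1 S T \<longleftrightarrow> S \<circ> T = T \<circ> S"
  by (simp add: qcommute_def)

locale complex_structured =
  fixes J :: "'h::real_inner \<Rightarrow> 'h"
  assumes complex_structure: "complex_structure J"
begin

lemma linear_J: "linear J"
  using complex_structure by (simp add: complex_structure_def)

lemma J_J [simp]: "J (J x) = - x"
  using complex_structure by (simp add: complex_structure_def)

lemma inner_J_left: "J x \<bullet> y = - (x \<bullet> J y)"
  using complex_structure[unfolded complex_structure_def, THEN conjunct2, THEN conjunct2]
  by (metis J_J inner_minus_right minus_minus)

lemma cscale_zero [simp]: "cscale J q 0 = 0"
  by (simp add: cscale_def linear_0[OF linear_J])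

lemma cscale_mult: "cscale J p (cscale J q x) = cscale J (p * q) x"
  by (simp add: cscale_def linear_add[OF linear_J] linear_scale[OF linear_J] algebra_simps)

lemma is_adjoint_cscale: "is_adjoint (cscale J q) (cscale J (cnj q))"
  by (simp add: is_adjoint_def cscale_def inner_add_left inner_add_right inner_diff_right inner_J_left)

lemma complex_linear_adjoint:
  assumes "is_adjoint T S" and "complex_linear J T"
  shows "complex_linear J S"
proof -
  have adj: "x \<bullet> S y = T x \<bullet> y" for x y
    using assms(1) by (simp add: is_adjoint_def)
  have "S (J y) = J (S y)" for y
  proof -
    have "x \<bullet> S (J y) = x \<bullet> J (S y)" for x
    proof -
      have "x \<bullet> S (J y) = T x \<bullet> J y"
        by (rule adj)
      also have "\<dots> = - (J (T x) \<bullet> y)"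
        by (simp only: inner_J_left minus_minus)
      also have "\<dots> = - (T (J x) \<bullet> y)"
        using assms(2) by (simp add: complex_linear_def)
      also have "\<dots> = - (J x \<bullet> S y)"
        by (simp only: adj)
      also have "\<dots> = x \<bullet> J (S y)"
        by (simp only: inner_J_left minus_minus)
      finally show ?thesis .
    qed
    then show ?thesis
      using vector_eq_ldot[of "S (J y)" "J (S y)"] by blast
  qed
  with is_adjoint_linear[OF assms(1)] show ?thesis
    by (simp add: complex_linear_def)
qed

lemma qcommute_comp_left:
  assumes "qcommute J p S1 T" and "qcommute J q S2 T" and "complex_linear J S1"
  shows "qcommute J (p * q) (S1 \<circ> S2) T"
  using assms by (simp add: qcommute_def fun_eq_iff complex_linear_cscale cscale_mult mult.commute)

lemma qcommute_comp_right:
  assumes "qcommute J p S T1" and "qcommute J q S T2" and "complex_linear J T1"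
  shows "qcommute J (p * q) S (T1 \<circ> T2)"
  using assms by (simp add: qcommute_def fun_eq_iff complex_linear_cscale cscale_mult)

lemma qcommute_funpow_left:
  assumes "qcommute J q S T" and "complex_linear J S"
  shows "qcommute J (q ^ a) (S ^^ a) T"
proof (induction a)
  case (Suc a)
  then show ?case
    using qcommute_comp_left[OF assms(1) Suc assms(2)] by (simp only: funpow.simps(2) power_Suc)
qed (simp add: qcommute_1 fun_eq_iff)

lemma qcommute_funpow_right:
  assumes "qcommute J q S T" and "complex_linear J T"
  shows "qcommute J (q ^ b) S (T ^^ b)"
proof (induction b)
  case (Suc b)
  then show ?case
    using qcommute_comp_right[OF assms(1) Suc assms(2)] by (simp only: funpow.simps(2) power_Suc)
qed (simp add: qcommute_1 fun_eq_iff)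

lemma qcommute_funpow:
  assumes "qcommute J q S T" and "complex_linear J S" and "complex_linear J T"
  shows "qcommute J (q ^ (a * b)) (S ^^ a) (T ^^ b)"
  using qcommute_funpow_left[OF qcommute_funpow_right[OF assms(1,3)] assms(2)]
  by (metis mult.commute power_mult)

lemma qcommute_oprod_right:
  assumes "\<And>j. j \<in> set xs \<Longrightarrow> qcommute J (q j) S (T j)"
    and "\<And>j. j \<in> set xs \<Longrightarrow> complex_linear J (T j)"
  shows "qcommute J (\<Prod>j\<leftarrow>xs. q j) S (oprod (map T xs))"
  using assms
  by (induction xs) (simp_all add: qcommute_1 qcommute_comp_right)

lemma qcommute_adjoint:
  assumes "qcommute J q S T" and "is_adjoint S S'" and "is_adjoint T T'"
    and "complex_linear J S" and "complex_linear J T"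
  shows "qcommute J (cnj q) T' S'"
proof -
  have "S \<circ> T = T \<circ> S \<circ> cscale J q"
    using assms(1,4,5) by (simp add: qcommute_def fun_eq_iff complex_linear_cscale)
  then have "is_adjoint (S \<circ> T) (cscale J (cnj q) \<circ> S' \<circ> T')"
    using is_adjoint_comp[OF is_adjoint_comp[OF assms(3,2)] is_adjoint_cscale]
    by (simp add: comp_assoc)
  then show ?thesis
    using is_adjoint_unique is_adjoint_comp[OF assms(2,3)] by (simp add: qcommute_def)
qed

lemma qcommute_sandwich:
  assumes "qcommute J q S T" and "cmod q = 1"
    and "is_adjoint S S'" and "is_adjoint T T'"
    and "complex_linear J S" and "complex_linear J T" and "complex_linear J W"
  shows "S \<circ> T \<circ> W \<circ> T' \<circ> S' = T \<circ> S \<circ> W \<circ> S' \<circ> T'"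
proof -
  have "T' \<circ> S' = cscale J (cnj q) \<circ> S' \<circ> T'"
    using qcommute_adjoint[OF assms(1,3-6)] by (simp add: qcommute_def)
  with assms(1) show ?thesis
    using assms(5-7)
    by (simp add: qcommute_def fun_eq_iff complex_linear_cscale cscale_mult
        unimodular_mult_cnj[OF assms(2)])
qed

end

locale doubly_noncommuting_tuple = complex_structured J for J :: "'h::real_inner \<Rightarrow> 'h" +
  fixes n :: nat and z :: "nat \<Rightarrow> nat \<Rightarrow> complex" and V Vs :: "nat \<Rightarrow> 'h \<Rightarrow> 'h"
  assumes doubly_noncommuting: "doubly_noncommuting J n z V Vs"
begin

lemma isometry_V: "i \<in> {1..n} \<Longrightarrow> isometry_op J (V i) (Vs i)"
  using doubly_noncommuting by (simp add: doubly_noncommuting_def)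

lemma is_adjoint_V: "i \<in> {1..n} \<Longrightarrow> is_adjoint (V i) (Vs i)"
  using isometry_V by (simp add: isometry_op_def)

lemma Vs_V: "i \<in> {1..n} \<Longrightarrow> Vs i (V i x) = x"
  using isometry_V by (simp add: isometry_op_def fun_eq_iff)

lemma complex_linear_V: "i \<in> {1..n} \<Longrightarrow> complex_linear J (V i)"
  using isometry_V
  by (simp add: isometry_op_def cbounded_op_def complex_linear_def bounded_linear.linear)

lemma complex_linear_Vs: "i \<in> {1..n} \<Longrightarrow> complex_linear J (Vs i)"
  using complex_linear_adjoint is_adjoint_V complex_linear_V by blast

lemma z_unimodular: "i \<in> {1..n} \<Longrightarrow> j \<in> {1..n} \<Longrightarrow> i \<noteq> j \<Longrightarrow> cmod (z i j) = 1"
  using doubly_noncommuting unfolding doubly_noncommuting_def by blast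

lemma z_swap: "i \<in> {1..n} \<Longrightarrow> j \<in> {1..n} \<Longrightarrow> i \<noteq> j \<Longrightarrow> z j i = cnj (z i j)"
  using doubly_noncommuting unfolding doubly_noncommuting_def by blast

lemma qcommute_Vs_V:
  "i \<in> {1..n} \<Longrightarrow> j \<in> {1..n} \<Longrightarrow> i \<noteq> j \<Longrightarrow> qcommute J (cnj (z i j)) (Vs i) (V j)"
  using doubly_noncommuting unfolding doubly_noncommuting_def qcommute_def by blast

text \<open>\<open>W = V\<^sub>i V\<^sub>j - z\<^sub>i\<^sub>j V\<^sub>j V\<^sub>i\<close> is killed by \<open>V\<^sub>i\<^sup>*\<close> and \<open>V\<^sub>j\<^sup>*\<close>, while
  its range lies in the ranges of \<open>V\<^sub>i\<close> and \<open>V\<^sub>j\<close>; hence \<open>W x \<bullet> W x = 0\<close>.\<close>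

lemma qcommute_V_V:
  assumes i: "i \<in> {1..n}" and j: "j \<in> {1..n}" and ij: "i \<noteq> j"
  shows "qcommute J (z i j) (V i) (V j)"
proof -
  define c where "c = z i j"
  have lin_Vi: "linear (Vs i)" and lin_Vj: "linear (Vs j)"
    using complex_linear_Vs[OF i] complex_linear_Vs[OF j] by (simp_all add: complex_linear_def)
  have "V i (V j x) = cscale J c (V j (V i x))" for x
  proof -
    define w where "w = V i (V j x) - cscale J c (V j (V i x))"
    have "Vs i w = V j x - cscale J (c * cnj c) (V j x)"
      by (simp add: w_def c_def Vs_V[OF i] linear_diff[OF lin_Vi] cscale_mult
          qcommuteD[OF qcommute_Vs_V[OF i j ij]] complex_linear_cscale[OF complex_linear_Vs[OF i]])
    then have Vs_i_w: "Vs i w = 0"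
      by (simp add: c_def unimodular_mult_cnj[OF z_unimodular[OF i j ij]])
    have "Vs j w = cscale J (cnj (z j i)) (V i x) - cscale J c (V i x)"
      by (simp add: w_def Vs_V[OF j] linear_diff[OF lin_Vj]
          qcommuteD[OF qcommute_Vs_V[OF j i ij[symmetric]]] complex_linear_cscale[OF complex_linear_Vs[OF j]])
    then have Vs_j_w: "Vs j w = 0"
      by (simp add: c_def z_swap[OF i j ij])
    have "w \<bullet> w = V i (V j x) \<bullet> w - cscale J c (V j (V i x)) \<bullet> w"
      using inner_diff_left[of "V i (V j x)" "cscale J c (V j (V i x))" w]
      by (simp only: w_def[symmetric])
    also have "\<dots> = V j x \<bullet> Vs i w - V i x \<bullet> Vs j (cscale J (cnj c) w)"
      using is_adjoint_V[OF i] is_adjoint_V[OF j] is_adjoint_cscale[of c]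
      by (simp add: is_adjoint_def)
    also have "\<dots> = 0"
      by (simp add: Vs_i_w Vs_j_w complex_linear_cscale[OF complex_linear_Vs[OF j]])
    finally show ?thesis
      by (simp add: w_def)
  qed
  then show ?thesis
    by (simp add: qcommute_def fun_eq_iff c_def)
qed

lemma complex_linear_wandering_projection:
  "i \<in> {1..n} \<Longrightarrow> complex_linear J (\<lambda>x. x - V i (Vs i x))"
  using complex_linear_diff_id[OF complex_linear_comp[OF complex_linear_V complex_linear_Vs] linear_J]
  by (simp add: comp_def)

lemma qcommute_Vs_Vs:
  assumes i: "i \<in> {1..n}" and j: "j \<in> {1..n}" and ij: "i \<noteq> j"
  shows "qcommute J (z i j) (Vs i) (Vs j)"
  using qcommute_adjoint[OF qcommute_V_V[OF j i ij[symmetric]] is_adjoint_V[OF j] is_adjoint_V[OF i]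
      complex_linear_V[OF j] complex_linear_V[OF i]]
  by (simp add: z_swap[OF i j ij])

lemma range_projection_commute:
  assumes i: "i \<in> {1..n}" and j: "j \<in> {1..n}" and ij: "i \<noteq> j"
  shows "(V i ^^ a \<circ> Vs i ^^ a) \<circ> V j ^^ b = V j ^^ b \<circ> (V i ^^ a \<circ> Vs i ^^ a)"
proof -
  have "qcommute J (z i j ^ (a * b) * cnj (z i j) ^ (a * b)) (V i ^^ a \<circ> Vs i ^^ a) (V j ^^ b)"
    by (intro qcommute_comp_left qcommute_funpow qcommute_V_V qcommute_Vs_V
        complex_linear_funpow complex_linear_V complex_linear_Vs i j ij)
  then show ?thesis
    by (simp flip: power_mult_distrib add: unimodular_mult_cnj[OF z_unimodular[OF i j ij]] qcommute_1)
qed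

lemma Vs_funpow_commute_wandering_projection:
  assumes i: "i \<in> {1..n}" and j: "j \<in> {1..n}" and ij: "i \<noteq> j"
  shows "Vs i ^^ a \<circ> (\<lambda>x. x - V j (Vs j x)) = (\<lambda>x. x - V j (Vs j x)) \<circ> Vs i ^^ a"
proof -
  have "qcommute J (cnj (z i j) ^ a * z i j ^ a) (Vs i ^^ a) (V j \<circ> Vs j)"
    by (intro qcommute_comp_right qcommute_funpow_left qcommute_V_V qcommute_Vs_V qcommute_Vs_Vs
        complex_linear_funpow complex_linear_V complex_linear_Vs i j ij)
  then have "Vs i ^^ a \<circ> (V j \<circ> Vs j) = (V j \<circ> Vs j) \<circ> Vs i ^^ a"
    by (simp flip: power_mult_distrib add: unimodular_mult_cnj[OF z_unimodular[OF i j ij]] qcommute_1)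
  moreover have "linear (Vs i ^^ a)"
    using complex_linear_funpow[OF complex_linear_Vs[OF i]] by (simp add: complex_linear_def)
  ultimately show ?thesis
    by (simp add: fun_eq_iff linear_diff)
qed

lemma conjugated_wandering_projection_commute:
  assumes i: "i \<in> {1..n}" and j: "j \<in> {1..n}" and ij: "i \<noteq> j"
  shows "(V i ^^ a \<circ> (\<lambda>x. x - V i (Vs i x)) \<circ> Vs i ^^ a) \<circ> V j ^^ b
    = V j ^^ b \<circ> (V i ^^ a \<circ> (\<lambda>x. x - V i (Vs i x)) \<circ> Vs i ^^ a)"
proof -
  have split: "V i ^^ a \<circ> (\<lambda>x. x - V i (Vs i x)) \<circ> Vs i ^^ a
      = (\<lambda>x. (V i ^^ a \<circ> Vs i ^^ a) x - (V i ^^ Suc a \<circ> Vs i ^^ Suc a) x)"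
    using complex_linear_funpow[OF complex_linear_V[OF i], of a]
    by (simp add: fun_eq_iff complex_linear_def linear_diff funpow_swap1)
  have "linear (V j ^^ b)"
    using complex_linear_funpow[OF complex_linear_V[OF j]] by (simp add: complex_linear_def)
  then show ?thesis
    unfolding split using range_projection_commute[OF i j ij, of a b]
      range_projection_commute[OF i j ij, of "Suc a" b]
    by (simp add: fun_eq_iff linear_diff del: funpow.simps)
qed

lemma oprod_conjugates:
  assumes "distinct L" and "set L \<subseteq> {1..n}"
    and "\<And>i. i \<in> set L \<Longrightarrow> complex_linear J (D i)"
    and "\<And>i j. i \<in> set L \<Longrightarrow> j \<in> set L \<Longrightarrow> i \<noteq> j \<Longrightarrow>
      Vs i ^^ k i \<circ> D j = D j \<circ> Vs i ^^ k i"
    and "\<And>i j. i \<in> set L \<Longrightarrow> j \<in> set L \<Longrightarrow> i \<noteq> j \<Longrightarrow>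
      (V i ^^ k i \<circ> D i \<circ> Vs i ^^ k i) \<circ> V j ^^ k j = V j ^^ k j \<circ> (V i ^^ k i \<circ> D i \<circ> Vs i ^^ k i)"
  shows "oprod (map (\<lambda>i. V i ^^ k i \<circ> D i \<circ> Vs i ^^ k i) L)
    = oprod (map (\<lambda>i. V i ^^ k i) L) \<circ> oprod (map D L) \<circ> oprod (map (\<lambda>i. Vs i ^^ k i) (rev L))"
  using assms
proof (induction L)
  case (Cons i L)
  have i: "i \<in> {1..n}" "i \<notin> set L" and L: "set L \<subseteq> {1..n}"
    using Cons.prems by auto
  define A where "A = oprod (map (\<lambda>j. V j ^^ k j) L)"
  define Y where "Y = oprod (map D L)"
  define B where "B = oprod (map (\<lambda>j. Vs j ^^ k j) (rev L))"
  have IH: "oprod (map (\<lambda>i. V i ^^ k i \<circ> D i \<circ> Vs i ^^ k i) L) = A \<circ> Y \<circ> B"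
    unfolding A_def Y_def B_def by (rule Cons.IH) (use Cons.prems in auto)
  have Q_A: "(V i ^^ k i \<circ> D i \<circ> Vs i ^^ k i) \<circ> A = A \<circ> (V i ^^ k i \<circ> D i \<circ> Vs i ^^ k i)"
    unfolding A_def
  proof (rule oprod_commute)
    fix f assume "f \<in> set (map (\<lambda>j. V j ^^ k j) L)"
    then obtain j where "j \<in> set L" "f = V j ^^ k j"
      by auto
    then show "(V i ^^ k i \<circ> D i \<circ> Vs i ^^ k i) \<circ> f = f \<circ> (V i ^^ k i \<circ> D i \<circ> Vs i ^^ k i)"
      using Cons.prems(5)[of i j] i(2) by (metis list.set_intros(1,2))
  qed
  have Vs_Y: "Vs i ^^ k i \<circ> Y = Y \<circ> Vs i ^^ k i"
    unfolding Y_def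
  proof (rule oprod_commute)
    fix f assume "f \<in> set (map D L)"
    then obtain j where "j \<in> set L" "f = D j"
      by auto
    then show "Vs i ^^ k i \<circ> f = f \<circ> Vs i ^^ k i"
      using Cons.prems(4)[of i j] i(2) by (metis list.set_intros(1,2))
  qed
  have linear_A: "complex_linear J A"
    unfolding A_def using L
    by (auto intro!: complex_linear_oprod complex_linear_funpow complex_linear_V simp: subset_iff)
  have "qcommute J (\<Prod>j\<leftarrow>L. z i j ^ (k i * k j)) (V i ^^ k i) A"
    unfolding A_def using L i
    by (auto intro!: qcommute_oprod_right qcommute_funpow qcommute_V_V complex_linear_funpow
        complex_linear_V simp: subset_iff)
  moreover have "cmod (\<Prod>j\<leftarrow>L. z i j ^ (k i * k j)) = 1"
  proof (rule norm_prod_list_unimodular)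
    fix j assume "j \<in> set L"
    with L i have "cmod (z i j) = 1"
      by (intro z_unimodular) auto
    then show "cmod (z i j ^ (k i * k j)) = 1"
      by (simp add: norm_power)
  qed
  moreover have "is_adjoint A B"
    unfolding A_def B_def using L
    by (auto intro!: is_adjoint_oprod is_adjoint_funpow is_adjoint_V simp: subset_iff)
  moreover have "complex_linear J (D i \<circ> Y)"
    unfolding Y_def using Cons.prems by (auto intro!: complex_linear_comp complex_linear_oprod)
  ultimately have sandwich: "V i ^^ k i \<circ> A \<circ> (D i \<circ> Y) \<circ> B \<circ> Vs i ^^ k i
      = A \<circ> V i ^^ k i \<circ> (D i \<circ> Y) \<circ> Vs i ^^ k i \<circ> B"
    using qcommute_sandwich is_adjoint_funpow[OF is_adjoint_V[OF i(1)]]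
      complex_linear_funpow[OF complex_linear_V[OF i(1)]] linear_A by blast
  have "oprod (map (\<lambda>i. V i ^^ k i \<circ> D i \<circ> Vs i ^^ k i) (i # L)) x
      = (V i ^^ k i \<circ> A \<circ> (D i \<circ> Y) \<circ> B \<circ> Vs i ^^ k i) x" for x
    using fun_cong[OF Q_A, of "Y (B x)"] fun_cong[OF Vs_Y, of "B x"] fun_cong[OF sandwich, of x]
    by (simp add: IH)
  then have expanded: "oprod (map (\<lambda>i. V i ^^ k i \<circ> D i \<circ> Vs i ^^ k i) (i # L))
      = V i ^^ k i \<circ> A \<circ> (D i \<circ> Y) \<circ> B \<circ> Vs i ^^ k i"
    by (rule ext)
  then show ?case
    by (subst expanded) (simp add: A_def Y_def B_def comp_assoc)
qed simp

end

theorem lemma3p3: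
  fixes J :: "'h::{real_inner,complete_space} \<Rightarrow> 'h"
    and n :: nat and z :: "nat \<Rightarrow> nat \<Rightarrow> complex"
    and V Vs :: "nat \<Rightarrow> 'h \<Rightarrow> 'h"
    and idx :: "nat list" and k :: "nat \<Rightarrow> nat"
  assumes "complex_structure J"
    and "doubly_noncommuting J n z V Vs"
    and "distinct idx" and "set idx \<subseteq> {1..n}"
  shows "oprod (map (\<lambda>i. (V i ^^ k i) \<circ> (\<lambda>x. x - V i (Vs i x)) \<circ> (Vs i ^^ k i)) idx)
           = oprod (map (\<lambda>i. V i ^^ k i) idx) \<circ> oprod (map (\<lambda>i. (\<lambda>x. x - V i (Vs i x))) idx)
             \<circ> oprod (map (\<lambda>i. Vs i ^^ k i) (rev idx)) \<and>
         oprod (map (\<lambda>i. (V i ^^ k i) \<circ> (Vs i ^^ k i)) idx)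
           = oprod (map (\<lambda>i. V i ^^ k i) idx) \<circ> oprod (map (\<lambda>i. Vs i ^^ k i) (rev idx))"
proof -
  interpret doubly_noncommuting_tuple J n z V Vs
    using assms(1,2) by unfold_locales
  have idx: "\<And>i. i \<in> set idx \<Longrightarrow> i \<in> {1..n}"
    using assms(4) by blast
  have "oprod (map (\<lambda>i. (V i ^^ k i) \<circ> (\<lambda>x. x - V i (Vs i x)) \<circ> (Vs i ^^ k i)) idx)
           = oprod (map (\<lambda>i. V i ^^ k i) idx) \<circ> oprod (map (\<lambda>i. (\<lambda>x. x - V i (Vs i x))) idx)
             \<circ> oprod (map (\<lambda>i. Vs i ^^ k i) (rev idx))"
    by (rule oprod_conjugates[OF assms(3,4)])
      (blast intro: idx complex_linear_wandering_projection Vs_funpow_commute_wandering_projection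
         conjugated_wandering_projection_commute)+
  moreover have "oprod (map (\<lambda>i. (V i ^^ k i) \<circ> id \<circ> (Vs i ^^ k i)) idx)
           = oprod (map (\<lambda>i. V i ^^ k i) idx) \<circ> oprod (map (\<lambda>_. id) idx)
             \<circ> oprod (map (\<lambda>i. Vs i ^^ k i) (rev idx))"
    by (rule oprod_conjugates[OF assms(3,4)])
      (simp_all add: complex_linear_id range_projection_commute[OF idx idx])
  ultimately show ?thesis
    by simp
qed

end
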